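(* Let $\beta_0,n,\delta,\gamma,r>0$, $k=2e^{-\gamma r}$, and assume $\frac{\beta_0}{\delta}(k-1)=1$. Consider $$\dot{x}(t)=-\Big[\frac{\beta_0}{1+x(t)^n}+\delta\Big]x(t)+k\,\frac{\beta_0\,x(t-r)}{1+x(t-r)^n}$$ with initial data $x=\phi$ on $[-r,0]$. Then the equilibrium $x_1=0$ is stable in the following sense: for every $\varepsilon>0$ there exists $\eta>0$ such that for every continuous $\phi:[-r,0]\to[0,\infty)$ with $\sup_{s\in[-r,0]}|\phi(s)|<\eta$, the solution satisfies $0\le x(t,\phi)<\varepsilon$ for all $t>0$.
   Context: $x(t,\phi)$ denotes the (unique, global, nonnegative) solution with initial function $\phi$. *)

theory Defs
  imports Complex_Main
begin

definition dde_solution ::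
  "real \<Rightarrow> real \<Rightarrow> real \<Rightarrow> real \<Rightarrow> real \<Rightarrow> (real \<Rightarrow> real) \<Rightarrow> (real \<Rightarrow> real) \<Rightarrow> bool" where
  "dde_solution b0 n d k r phi x \<longleftrightarrow>
     continuous_on {-r..} x \<and>
     (\<forall>s\<in>{-r..0}. x s = phi s) \<and>
     (\<forall>t\<ge>-r. 0 \<le> x t) \<and>
     (\<forall>t>0. (x has_real_derivative
          (-(b0 / (1 + x t powr n) + d) * x t
           + k * (b0 * x (t - r) / (1 + x (t - r) powr n)))) (at t))"

end

theory Submission
  imports Defs "HOL-Analysis.Analysis"
begin

(* Writing H(y) = b0 y / (1 + y^n) for the Hill-type birth term, we use
     V(u) = x(u) + k * integral over [u-r, u] of H(x(s)).
   Along solutions V'(u) = x(u) ((k-1) b0 / (1 + x(u)^n) - d)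
                         = d x(u) (1/(1 + x(u)^n) - 1) <= 0,
   so V is nonincreasing on [0, oo).  Since H >= 0 we get x(t) <= V(t) <= V(0),
   and since H(y) <= b0 y we get V(0) <= (1 + k b0 r) sup |phi|.  Hence every
   solution stays below (1 + k b0 r) sup |phi|, which gives stability with
   eta = eps / (1 + k b0 r). *)

lemma integral_from_has_real_derivative:
  fixes h :: "real \<Rightarrow> real"
  assumes h: "continuous_on {a..} h" and y: "a < y"
  shows "((\<lambda>u. integral {a..u} h) has_real_derivative h y) (at y)"
proof -
  have "continuous_on {a..y+1} h"
    using h by (rule continuous_on_subset) auto
  then have "((\<lambda>u. integral {a..u} h) has_real_derivative h y) (at y within {a..y+1})"
    using y by (intro integral_has_real_derivative) auto
  moreover have "at y within {a..y+1} = at y"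
    using y by (intro at_within_interior) simp
  ultimately show ?thesis by simp
qed

lemma window_integral_split:
  fixes h :: "real \<Rightarrow> real"
  assumes h: "continuous_on {a..} h" and r: "0 \<le> r" and u: "a + r \<le> u"
  shows "integral {u - r..u} h = integral {a..u} h - integral {a..u - r} h"
proof -
  have "h integrable_on {a..u}"
    using h by (intro integrable_continuous_interval) (rule continuous_on_subset, auto)
  then have "integral {a..u - r} h + integral {u - r..u} h = integral {a..u} h"
    using r u by (intro Henstock_Kurzweil_Integration.integral_combine) auto
  then show ?thesis by linarith
qed

lemma window_integral_has_real_derivative:
  fixes h :: "real \<Rightarrow> real"
  assumes h: "continuous_on {a..} h" and r: "0 \<le> r" and u: "a + r < u"
  shows "((\<lambda>v. integral {v - r..v} h) has_real_derivative h u - h (u - r)) (at u)"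
proof (rule has_field_derivative_transform_within_open)
  have right: "((\<lambda>v. integral {a..v} h) has_real_derivative h u) (at u)"
    using r u by (intro integral_from_has_real_derivative[OF h]) auto
  have "((\<lambda>v. integral {a..v} h) has_real_derivative h (u - r)) (at (u - r))"
    using u by (intro integral_from_has_real_derivative[OF h]) auto
  moreover have "((\<lambda>v. v - r) has_real_derivative 1) (at u)"
    by (auto intro!: derivative_eq_intros)
  ultimately have left: "((\<lambda>v. integral {a..v - r} h) has_real_derivative h (u - r)) (at u)"
    using DERIV_chain2 by fastforce
  show "((\<lambda>v. integral {a..v} h - integral {a..v - r} h)
          has_real_derivative h u - h (u - r)) (at u)"
    using DERIV_diff[OF right left] .
  show "open {a + r<..}" "u \<in> {a + r<..}" using u by auto
  show "integral {a..v} h - integral {a..v - r} h = integral {v - r..v} h"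
    if "v \<in> {a + r<..}" for v
    using window_integral_split[OF h r] that by simp
qed

lemma window_integral_continuous_on:
  fixes h :: "real \<Rightarrow> real"
  assumes h: "continuous_on {a..} h" and r: "0 \<le> r"
  shows "continuous_on {a + r..b} (\<lambda>v. integral {v - r..v} h)"
proof -
  have "h integrable_on {a..b}"
    using h by (intro integrable_continuous_interval) (rule continuous_on_subset, auto)
  then have F: "continuous_on {a..b} (\<lambda>v. integral {a..v} h)"
    by (rule indefinite_integral_continuous_1)
  have right: "continuous_on {a + r..b} (\<lambda>v. integral {a..v} h)"
    using F by (rule continuous_on_subset) (use r in auto)
  have left: "continuous_on {a + r..b} (\<lambda>v. integral {a..v - r} h)"
    by (rule continuous_on_compose2[OF F]) (use r in \<open>auto intro!: continuous_intros\<close>)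
  have "continuous_on {a + r..b} (\<lambda>v. integral {a..v} h - integral {a..v - r} h)"
    using right left by (rule continuous_on_diff)
  then show ?thesis
    by (rule continuous_on_cong[THEN iffD1, rotated 2])
       (auto simp: window_integral_split[OF h r])
qed

definition hill :: "real \<Rightarrow> real \<Rightarrow> real \<Rightarrow> real" where
  "hill b0 n y = b0 * y / (1 + y powr n)"

lemma hill_nonneg: "0 \<le> b0 \<Longrightarrow> 0 \<le> y \<Longrightarrow> 0 \<le> hill b0 n y"
  unfolding hill_def by (simp add: add_nonneg_nonneg)

text \<open>The saturation factor 1/(1 + y^n) never exceeds 1.\<close>
lemma hill_le_linear:
  assumes "0 \<le> b0" and "0 \<le> y"
  shows "hill b0 n y \<le> b0 * y"
proof -
  have "b0 * y / (1 + y powr n) \<le> b0 * y / 1"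
    using assms by (intro divide_left_mono) (auto simp: add_pos_nonneg)
  then show ?thesis unfolding hill_def by simp
qed

lemma continuous_on_hill:
  assumes x: "continuous_on S x" and nonneg: "\<forall>s\<in>S. 0 \<le> x s" and n: "0 < n"
  shows "continuous_on S (\<lambda>s. hill b0 n (x s))"
proof -
  have "continuous_on S (\<lambda>s. x s powr n)"
    using nonneg n by (intro continuous_on_powr' x continuous_on_const) auto
  moreover have "1 + x s powr n \<noteq> 0" for s
    by (metis add_pos_nonneg less_numeral_extra(3) powr_ge_zero zero_less_one)
  ultimately show ?thesis
    unfolding hill_def using x
    by (intro continuous_on_divide continuous_on_mult continuous_on_add continuous_on_const)
       auto
qed

definition lyapunov ::
  "real \<Rightarrow> real \<Rightarrow> real \<Rightarrow> real \<Rightarrow> (real \<Rightarrow> real) \<Rightarrow> real \<Rightarrow> real" where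
  "lyapunov b0 n k r x u = x u + k * integral {u - r..u} (\<lambda>s. hill b0 n (x s))"

text \<open>Pointwise sign of the derivative of the functional: in the critical case
  (k - 1) b0 = d the delayed contributions cancel and what remains is
  d x (1/(1 + x^n) - 1), which is nonpositive.\<close>
lemma lyapunov_rate_nonpos:
  assumes crit: "(k - 1) * b0 = d" and d: "0 \<le> d" and y: "0 \<le> y"
  shows "-(b0 / (1 + y powr n) + d) * y + k * z + k * (hill b0 n y - z) \<le> 0"
proof -
  define q where "q = 1 + y powr n"
  have q: "1 \<le> q" unfolding q_def by simp
  have "-(b0 / q + d) * y + k * z + k * (b0 * y / q - z) = y * ((k - 1) * b0 / q - d)"
    using q by (simp add: field_simps)
  also have "\<dots> = y * (d / q - d)" using crit by simp
  also have "\<dots> \<le> 0"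
    using divide_left_mono[of 1 q d] q d y by (intro mult_nonneg_nonpos) auto
  finally show ?thesis unfolding hill_def q_def .
qed

lemma lyapunov_nonincreasing:
  assumes sol: "dde_solution b0 n d k r phi x"
    and b0: "0 \<le> b0" and n: "0 < n" and d: "0 \<le> d" and r: "0 < r"
    and crit: "(k - 1) * b0 = d" and t: "0 \<le> t"
  shows "lyapunov b0 n k r x t \<le> lyapunov b0 n k r x 0"
proof -
  have cx: "continuous_on {-r..} x" and xnn: "\<forall>s\<ge>-r. 0 \<le> x s"
    and xder: "\<And>u. 0 < u \<Longrightarrow> (x has_real_derivative
          -(b0 / (1 + x u powr n) + d) * x u + k * hill b0 n (x (u - r))) (at u)"
    using sol by (auto simp: dde_solution_def hill_def)
  have ch: "continuous_on {-r..} (\<lambda>s. hill b0 n (x s))"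
    using xnn n by (intro continuous_on_hill cx) auto
  have "\<exists>y. (lyapunov b0 n k r x has_real_derivative y) (at u) \<and> y \<le> 0"
    if u: "0 < u" for u
  proof (intro exI conjI)
    show "(lyapunov b0 n k r x has_real_derivative
            -(b0 / (1 + x u powr n) + d) * x u + k * hill b0 n (x (u - r))
            + k * (hill b0 n (x u) - hill b0 n (x (u - r)))) (at u)"
      unfolding lyapunov_def
      using u r window_integral_has_real_derivative[OF ch, of r u]
      by (intro DERIV_add xder DERIV_cmult) auto
    show "-(b0 / (1 + x u powr n) + d) * x u + k * hill b0 n (x (u - r))
            + k * (hill b0 n (x u) - hill b0 n (x (u - r))) \<le> 0"
      using u r xnn by (intro lyapunov_rate_nonpos crit d) auto
  qed
  moreover have "continuous_on {0..t} (lyapunov b0 n k r x)"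
  proof -
    have "continuous_on {0..t} x"
      using cx by (rule continuous_on_subset) (use r in auto)
    moreover have "continuous_on {0..t} (\<lambda>v. integral {v - r..v} (\<lambda>s. hill b0 n (x s)))"
      using window_integral_continuous_on[OF ch, of r t] r by simp
    ultimately show ?thesis
      unfolding lyapunov_def by (intro continuous_intros)
  qed
  ultimately show ?thesis
    using DERIV_nonpos_imp_decreasing_open[OF t] by blast
qed

text \<open>Since the birth term is nonnegative, the functional dominates the solution.\<close>
lemma solution_le_lyapunov:
  assumes sol: "dde_solution b0 n d k r phi x"
    and b0: "0 \<le> b0" and n: "0 < n" and k: "0 \<le> k" and r: "0 \<le> r" and t: "0 \<le> t"
  shows "x t \<le> lyapunov b0 n k r x t"
proof -
  have cx: "continuous_on {-r..} x" and xnn: "\<forall>s\<ge>-r. 0 \<le> x s"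
    using sol by (auto simp: dde_solution_def)
  have "continuous_on {t - r..t} (\<lambda>s. hill b0 n (x s))"
    using xnn n t by (intro continuous_on_hill) (auto intro: continuous_on_subset[OF cx])
  then have "0 \<le> integral {t - r..t} (\<lambda>s. hill b0 n (x s))"
    using xnn t b0 by (intro integral_nonneg integrable_continuous_interval hill_nonneg) auto
  then show ?thesis unfolding lyapunov_def using k by simp
qed

text \<open>At time 0 the functional only sees the initial datum, and the linear bound
  on the birth term controls it by the size of the datum.\<close>
lemma lyapunov_initial_bound:
  assumes sol: "dde_solution b0 n d k r phi x"
    and b0: "0 \<le> b0" and n: "0 < n" and k: "0 \<le> k" and r: "0 \<le> r"
    and phi_le: "\<forall>s\<in>{-r..0}. phi s \<le> S"
  shows "lyapunov b0 n k r x 0 \<le> (1 + k * b0 * r) * S"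
proof -
  have cx: "continuous_on {-r..} x" and xphi: "\<forall>s\<in>{-r..0}. x s = phi s"
    and xnn: "\<forall>s\<ge>-r. 0 \<le> x s"
    using sol by (auto simp: dde_solution_def)
  have x_le: "x s \<le> S" if "s \<in> {-r..0}" for s
    using that xphi phi_le by auto
  have "(\<lambda>s. hill b0 n (x s)) integrable_on {-r..0}"
    using xnn n by (intro integrable_continuous_interval continuous_on_hill)
                   (auto intro: continuous_on_subset[OF cx])
  then have "integral {-r..0} (\<lambda>s. hill b0 n (x s)) \<le> integral {-r..0} (\<lambda>_. b0 * S)"
  proof (rule integral_le)
    show "hill b0 n (x s) \<le> b0 * S" if "s \<in> {-r..0}" for s
      using hill_le_linear[OF b0, of "x s" n] mult_left_mono[OF x_le[OF that] b0]
        xnn that by auto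
  qed (rule integrable_const_ivl)
  also have "\<dots> = b0 * S * r" using r by simp
  finally have "k * integral {-r..0} (\<lambda>s. hill b0 n (x s)) \<le> k * (b0 * S * r)"
    using k by (rule mult_left_mono)
  moreover have "x 0 \<le> S" using x_le r by auto
  ultimately show ?thesis
    unfolding lyapunov_def by (simp add: algebra_simps)
qed

lemma solution_bound:
  assumes sol: "dde_solution b0 n d k r phi x"
    and b0: "0 \<le> b0" and n: "0 < n" and d: "0 \<le> d" and r: "0 < r" and k: "0 \<le> k"
    and crit: "(k - 1) * b0 = d"
    and phi_le: "\<forall>s\<in>{-r..0}. phi s \<le> S" and t: "0 \<le> t"
  shows "x t \<le> (1 + k * b0 * r) * S"
proof -
  have "x t \<le> lyapunov b0 n k r x t"
    using solution_le_lyapunov[OF sol b0 n k _ t] r by simp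
  also have "\<dots> \<le> lyapunov b0 n k r x 0"
    using lyapunov_nonincreasing[OF sol b0 n d r crit t] .
  also have "\<dots> \<le> (1 + k * b0 * r) * S"
    using lyapunov_initial_bound[OF sol b0 n k _ phi_le] r by simp
  finally show ?thesis .
qed

lemma le_SUP_abs:
  fixes phi :: "real \<Rightarrow> real"
  assumes "continuous_on {a..b} phi" and "s \<in> {a..b}"
  shows "phi s \<le> (SUP s\<in>{a..b}. \<bar>phi s\<bar>)"
proof -
  have "compact ((\<lambda>s. \<bar>phi s\<bar>) ` {a..b})"
    using assms(1) by (intro compact_continuous_image continuous_intros) auto
  then have "bdd_above ((\<lambda>s. \<bar>phi s\<bar>) ` {a..b})"
    by (intro bounded_imp_bdd_above compact_imp_bounded)
  then have "\<bar>phi s\<bar> \<le> (SUP s\<in>{a..b}. \<bar>phi s\<bar>)"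
    using assms(2) by (rule cSUP_upper[rotated])
  then show ?thesis by simp
qed

theorem mainTheorem4:
  fixes b0 n d g r k :: real
  assumes "b0 > 0" and "n > 0" and "d > 0" and "g > 0" and "r > 0"
    and "k = 2 * exp (- g * r)"
    and "b0 / d * (k - 1) = 1"
  shows "\<forall>\<epsilon>>0. \<exists>\<eta>>0. \<forall>phi x.
           continuous_on {-r..0} phi \<and> (\<forall>s\<in>{-r..0}. 0 \<le> phi s) \<and>
           (SUP s\<in>{-r..0}. \<bar>phi s\<bar>) < \<eta> \<and>
           dde_solution b0 n d k r phi x
           \<longrightarrow> (\<forall>t>0. 0 \<le> x t \<and> x t < \<epsilon>)"
proof (intro allI impI)
  fix \<epsilon> :: real assume \<epsilon>: "\<epsilon> > 0"
  have k: "0 < k" using assms(6) by simp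
  have crit: "(k - 1) * b0 = d" using assms(3,7) by (simp add: field_simps)
  define C where "C = 1 + k * b0 * r"
  have C: "0 < C" unfolding C_def using k assms(1,5) by (simp add: add_pos_nonneg)
  show "\<exists>\<eta>>0. \<forall>phi x. continuous_on {-r..0} phi \<and> (\<forall>s\<in>{-r..0}. 0 \<le> phi s) \<and>
           (SUP s\<in>{-r..0}. \<bar>phi s\<bar>) < \<eta> \<and> dde_solution b0 n d k r phi x
           \<longrightarrow> (\<forall>t>0. 0 \<le> x t \<and> x t < \<epsilon>)"
  proof (intro exI[of _ "\<epsilon> / C"] conjI allI impI)
    show "0 < \<epsilon> / C" using \<epsilon> C by simp
    fix phi x :: "real \<Rightarrow> real" and t :: real
    assume H: "continuous_on {-r..0} phi \<and> (\<forall>s\<in>{-r..0}. 0 \<le> phi s) \<and>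
           (SUP s\<in>{-r..0}. \<bar>phi s\<bar>) < \<epsilon> / C \<and> dde_solution b0 n d k r phi x"
      and t: "0 < t"
    define S where "S = (SUP s\<in>{-r..0}. \<bar>phi s\<bar>)"
    have sol: "dde_solution b0 n d k r phi x" using H by blast
    have "\<forall>s\<in>{-r..0}. phi s \<le> S"
      using H le_SUP_abs unfolding S_def by blast
    then have "x t \<le> C * S"
      unfolding C_def using assms(1-3,5) k t crit
      by (intro solution_bound[OF sol]) auto
    also have "\<dots> < \<epsilon>"
      using H C unfolding S_def by (simp only: pos_less_divide_eq mult.commute)
    finally show "x t < \<epsilon>" .
    show "0 \<le> x t" using sol t assms(5) by (auto simp: dde_solution_def)
  qed
qed

end
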